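(* Let $\Omega=\{z\in\mathbb{C}:|z|=1\}$ and, for $|\psi|<1$, let $BC_+(\psi)$ and $BC_-(\psi)$ be the distributions on $\Omega\times\Omega$ with densities $\frac{1}{4\pi^2}\frac{1-|\psi|^2}{|1-\psi z_v\overline{z_u}|^2}$ and $\frac{1}{4\pi^2}\frac{1-|\psi|^2}{|1-\psi z_v z_u|^2}$ respectively. These distributions are infinitely divisible with respect to componentwise multiplication: if $(Z_U,Z_V)\sim BC_\pm(\psi)$, then for every positive integer $n$, if $(Z_{Uj},Z_{Vj})$, $j=1,\dots,n$, are i.i.d. from $BC_\pm(\sqrt[n]{\psi})$ (same sign), where $\sqrt[n]{\psi}$ is an $n$-th root of $\psi$, then $\left(\prod_{j=1}^nZ_{Uj},\prod_{j=1}^nZ_{Vj}\right)\stackrel{d}{=}(Z_U,Z_V)$.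
   Context: Densities are with respect to arc-length measure on each circle. *)

theory Defs
  imports "HOL-Probability.Probability"
begin

definition circle_measure :: "complex measure" where
  "circle_measure = distr (restrict_space lborel {0..<2*pi}) borel cis"

text \<open>Density of BC_+(psi) (s = True) and BC_-(psi) (s = False) at (z_u, z_v).\<close>
definition BC_density :: "bool \<Rightarrow> complex \<Rightarrow> complex \<times> complex \<Rightarrow> real" where
  "BC_density s psi = (\<lambda>(zu, zv).
     1 / (4 * pi\<^sup>2) * (1 - (cmod psi)\<^sup>2) /
       (cmod (1 - psi * zv * (if s then cnj zu else zu)))\<^sup>2)"

definition BC :: "bool \<Rightarrow> complex \<Rightarrow> (complex \<times> complex) measure" where
  "BC s psi = density (circle_measure \<Otimes>\<^sub>M circle_measure)
                (\<lambda>z. ennreal (BC_density s psi z))"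

end

theory Submission
  imports Defs
begin

text \<open>
  A finite measure concentrated on the torus is determined by its Fourier coefficients
  \<open>\<integral> z\<^sub>u\<^sup>j z\<^sub>v\<^sup>k\<close>: by Stone--Weierstrass, trigonometric polynomials approximate every continuous
  function uniformly on the torus, and integrals of continuous functions determine the
  measure of closed sets.

  Conditionally on \<open>z\<^sub>u\<close>, the density of \<open>BC\<^sub>\<plusminus>(\<psi>)\<close> is the Poisson kernel in \<open>z\<^sub>v\<close> with
  parameter \<open>a = \<psi> z\<^sub>u\<close> (sign \<open>-\<close>) or \<open>a = \<psi> cnj z\<^sub>u\<close> (sign \<open>+\<close>). Expanding \<open>1 / (1 - a z)\<close>
  in a geometric series shows that its \<open>k\<close>-th Fourier coefficient is \<open>a\<^sup>-\<^sup>k\<close> for \<open>k \<le> 0\<close> and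
  \<open>(cnj a)\<^sup>k\<close> for \<open>k > 0\<close>. Integrating over \<open>z\<^sub>u\<close> then gives the coefficients of \<open>BC\<^sub>\<plusminus>(\<psi>)\<close>:
  \<open>\<rho>\<^sub>k(\<psi>)\<close> if \<open>j \<plusminus> k = 0\<close> and \<open>0\<close> otherwise, with \<open>\<rho>\<^sub>k\<close> the Poisson coefficient above.
  The coefficients of a componentwise product of independent torus-valued variables are the
  products of their coefficients, and \<open>\<rho>\<^sub>k(w)\<^sup>n = \<rho>\<^sub>k(w\<^sup>n)\<close>; so the product of \<open>n\<close> independent
  copies of \<open>BC\<^sub>\<plusminus>(w)\<close> has the coefficients, hence the law, of \<open>BC\<^sub>\<plusminus>(w\<^sup>n)\<close>.
\<close>

section \<open>Finite Borel measures are determined by continuous functions\<close>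

lemma closed_indicator_continuous_approx:
  fixes S :: "'a::metric_space set"
  assumes "closed S" "S \<noteq> {}"
  obtains h :: "nat \<Rightarrow> 'a \<Rightarrow> real"
  where "\<And>k. continuous_on UNIV (h k)" "\<And>k x. h k x \<in> {0..1}"
    and "\<And>x. (\<lambda>k. h k x) \<longlonglongrightarrow> indicator S x"
proof
  define h where "h k x = max 0 (1 - real k * infdist x S)" for k :: nat and x
  show "continuous_on UNIV (h k)" for k
    unfolding h_def by (intro continuous_intros)
  show "h k x \<in> {0..1}" for k x
    unfolding h_def using infdist_nonneg[of x S] by auto
  show "(\<lambda>k. h k x) \<longlonglongrightarrow> indicator S x" for x
  proof (cases "x \<in> S")
    case True
    then show ?thesis by (simp add: h_def infdist_zero)
  next
    case False
    have d: "infdist x S > 0"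
      using in_closed_iff_infdist_zero[OF assms] False infdist_nonneg[of x S] by auto
    obtain k0 :: nat where k0: "1 / infdist x S < k0" using reals_Archimedean2 by blast
    have "h k x = 0" if "k0 \<le> k" for k
    proof -
      have "1 / infdist x S < real k" using k0 that by linarith
      then show ?thesis using d by (simp add: h_def field_simps)
    qed
    then have "eventually (\<lambda>k. h k x = 0) sequentially"
      by (auto simp: eventually_sequentially)
    then show ?thesis using False by (simp add: tendsto_eventually)
  qed
qed

lemma finite_measure_eqI_integral_continuous:
  fixes M N :: "'a::metric_space measure"
  assumes "finite_measure M" "finite_measure N"
    and sets_M: "sets M = sets borel" and sets_N: "sets N = sets borel"
    and integral_eq: "\<And>f :: 'a \<Rightarrow> real. continuous_on UNIV f \<Longrightarrow> (\<And>x. f x \<in> {0..1}) \<Longrightarrow>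
                        integral\<^sup>L M f = integral\<^sup>L N f"
  shows "M = N"
proof -
  interpret M: finite_measure M by fact
  interpret N: finite_measure N by fact
  have emeasure_closed: "emeasure M S = emeasure N S" if S: "closed S" for S
  proof (cases "S = {}")
    case False
    obtain h :: "nat \<Rightarrow> 'a \<Rightarrow> real"
      where hc: "\<And>k. continuous_on UNIV (h k)" and hb: "\<And>k x. h k x \<in> {0..1}"
      and lim: "\<And>x. (\<lambda>k. h k x) \<longlonglongrightarrow> indicator S x"
      using closed_indicator_continuous_approx[OF S False] by blast
    have conv: "(\<lambda>k. integral\<^sup>L K (h k)) \<longlonglongrightarrow> integral\<^sup>L K (indicator S :: 'a \<Rightarrow> real)"
      if "finite_measure K" "sets K = sets borel" for K
    proof -
      interpret K: finite_measure K by fact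
      have "h k \<in> borel_measurable K" for k
        using borel_measurable_continuous_onI[OF hc] measurable_cong_sets[OF that(2) refl] by blast
      moreover have "(indicator S :: 'a \<Rightarrow> real) \<in> borel_measurable K"
        using S that(2) by (intro borel_measurable_indicator) (simp add: borel_closed)
      ultimately show ?thesis
        using hb lim by (intro integral_dominated_convergence[where w="\<lambda>_. 1"]) (auto intro: AE_I2)
    qed
    have "integral\<^sup>L M (indicator S) = integral\<^sup>L N (indicator S :: _ \<Rightarrow> real)"
      using LIMSEQ_unique[OF conv[OF assms(1) sets_M]] conv[OF assms(2) sets_N] integral_eq[OF hc hb]
      by simp
    moreover have "S \<in> sets M" "S \<in> sets N" using S by (simp_all add: sets_M sets_N borel_closed)
    ultimately show ?thesis by (simp add: M.emeasure_eq_measure N.emeasure_eq_measure)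
  qed simp
  show ?thesis
  proof (rule measure_eqI_generator_eq[where E="Collect closed" and \<Omega>=UNIV and A="\<lambda>_. UNIV"])
    show "sets M = sigma_sets UNIV (Collect closed)" "sets N = sigma_sets UNIV (Collect closed)"
      unfolding sets_M sets_N borel_eq_closed by simp_all
    show "emeasure M UNIV \<noteq> \<infinity>"
      using M.emeasure_finite[of "space M"] sets_eq_imp_space_eq[OF sets_M] by simp
    show "Int_stable (Collect closed)" by (auto simp: Int_stable_def)
  qed (use emeasure_closed in auto)
qed

section \<open>Measures on the torus are determined by their Fourier coefficients\<close>

definition torus :: "(complex \<times> complex) set" where
  "torus = sphere 0 1 \<times> sphere 0 1"

lemma mem_torus: "z \<in> torus \<longleftrightarrow> cmod (fst z) = 1 \<and> cmod (snd z) = 1"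
  by (cases z) (simp add: torus_def)

lemma compact_torus: "compact torus"
  unfolding torus_def by (intro compact_Times compact_sphere)

lemma torus_in_borel [measurable]: "torus \<in> sets borel"
  using compact_torus by (simp add: borel_compact)

definition torus_char :: "int \<Rightarrow> int \<Rightarrow> complex \<times> complex \<Rightarrow> complex" where
  "torus_char j k z = fst z powi j * snd z powi k"

lemma torus_char_Pair [simp]: "torus_char j k (u, v) = u powi j * v powi k"
  by (simp add: torus_char_def)

lemma borel_measurable_powi [measurable]: "(\<lambda>x::complex. x powi j) \<in> borel_measurable borel"
proof (cases "0 \<le> j")
  case True
  have "(\<lambda>x::complex. x ^ nat j) \<in> borel_measurable borel" by measurable
  then show ?thesis using True by (simp add: power_int_def)
next
  case False
  have "(\<lambda>x::complex. inverse x ^ nat (-j)) \<in> borel_measurable borel" by measurable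
  then show ?thesis using False by (simp add: power_int_def)
qed

lemma borel_measurable_torus_char [measurable]: "torus_char j k \<in> borel_measurable borel"
proof -
  have "torus_char j k \<in> borel_measurable (borel \<Otimes>\<^sub>M borel)"
    unfolding torus_char_def by measurable
  then show ?thesis by (simp only: borel_prod)
qed

lemma norm_torus_char: "z \<in> torus \<Longrightarrow> norm (torus_char j k z) = 1"
  by (simp add: torus_char_def mem_torus norm_mult norm_power_int)

lemma torus_char_add:
  assumes "z \<in> torus"
  shows "torus_char (j + l) (k + m) z = torus_char j k z * torus_char l m z"
proof -
  have "fst z \<noteq> 0" "snd z \<noteq> 0" using assms by (auto simp: mem_torus)
  then show ?thesis by (simp add: torus_char_def power_int_add mult_ac)
qed

inductive trig_poly :: "(complex \<times> complex \<Rightarrow> complex) \<Rightarrow> bool" where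
  trig_poly_char: "trig_poly (\<lambda>z. c * torus_char j k z)"
| trig_poly_add: "trig_poly f \<Longrightarrow> trig_poly g \<Longrightarrow> trig_poly (\<lambda>z. f z + g z)"

lemma trig_poly_mult_on_torus:
  assumes "trig_poly f" "trig_poly g"
  obtains h where "trig_poly h" "\<And>z. z \<in> torus \<Longrightarrow> h z = f z * g z"
  using assms
proof (induction arbitrary: thesis rule: trig_poly.induct)
  case (trig_poly_char c j k)
  from \<open>trig_poly g\<close> have "\<exists>h. trig_poly h \<and> (\<forall>z\<in>torus. h z = c * torus_char j k z * g z)"
  proof (induction rule: trig_poly.induct)
    case (trig_poly_char d l m)
    show ?case
      by (intro exI[of _ "\<lambda>z. (c * d) * torus_char (j + l) (k + m) z"])
         (simp add: trig_poly.trig_poly_char torus_char_add)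
  next
    case (trig_poly_add g1 g2)
    then show ?case by (metis (no_types, lifting) distrib_left trig_poly.trig_poly_add)
  qed
  then show ?case using trig_poly_char.prems by blast
next
  case (trig_poly_add f1 f2)
  obtain h1 h2 where "trig_poly h1" "trig_poly h2"
    and "\<And>z. z \<in> torus \<Longrightarrow> h1 z = f1 z * g z" "\<And>z. z \<in> torus \<Longrightarrow> h2 z = f2 z * g z"
    using trig_poly_add.IH trig_poly_add.prems(2) by metis
  then show ?case
    using trig_poly_add.prems(1)[of "\<lambda>z. h1 z + h2 z"] by (simp add: trig_poly.trig_poly_add distrib_right)
qed

lemma bounded_linear_eq_trig_poly_on_torus:
  fixes f :: "complex \<times> complex \<Rightarrow> real"
  assumes f: "bounded_linear f"
  obtains g where "trig_poly g" "\<And>z. z \<in> torus \<Longrightarrow> complex_of_real (f z) = g z"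
proof
  \<comment> \<open>\<open>f (u, v) = Re (a u + b v)\<close>, and \<open>Re w = (w + cnj w) / 2\<close> with \<open>cnj u = u powi -1\<close> on the torus\<close>
  define a where "a = complex_of_real (f (1, 0)) - \<i> * complex_of_real (f (\<i>, 0))"
  define b where "b = complex_of_real (f (0, 1)) - \<i> * complex_of_real (f (0, \<i>))"
  show "trig_poly (\<lambda>z. a / 2 * torus_char 1 0 z + (cnj a / 2 * torus_char (-1) 0 z +
                     (b / 2 * torus_char 0 1 z + cnj b / 2 * torus_char 0 (-1) z)))"
    by (intro trig_poly.intros)
  fix z :: "complex \<times> complex" assume z: "z \<in> torus"
  obtain u v where uv: "z = (u, v)" by (cases z)
  have u: "u powi -1 = cnj u" and v: "v powi -1 = cnj v"
    using z complex_norm_square[of u] complex_norm_square[of v]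
    by (auto simp: uv mem_torus power_int_minus inverse_unique)
  have "(u, v) = Re u *\<^sub>R (1, 0) + Im u *\<^sub>R (\<i>, 0) + Re v *\<^sub>R (0, 1) + Im v *\<^sub>R (0, \<i>)"
    by (simp add: complex_eq_iff scaleR_prod_def)
  then have "f (u, v) = Re u * f (1, 0) + Im u * f (\<i>, 0) + Re v * f (0, 1) + Im v * f (0, \<i>)"
    using linear_add[OF bounded_linear.linear[OF f]] linear_scale[OF bounded_linear.linear[OF f]]
    by (metis real_scaleR_def)
  also have "\<dots> = Re (a * u) + Re (b * v)"
    by (simp add: a_def b_def)
  finally have "f z = Re (a * u) + Re (b * v)" by (simp add: uv)
  moreover have re: "complex_of_real (Re w) = (w + cnj w) / 2" for w
    using complex_add_cnj[of w] by simp
  ultimately have "complex_of_real (f z) = (a * u + cnj (a * u)) / 2 + (b * v + cnj (b * v)) / 2"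
    by (simp only: of_real_add)
  then show "complex_of_real (f z) = a / 2 * torus_char 1 0 z + (cnj a / 2 * torus_char (-1) 0 z +
                     (b / 2 * torus_char 0 1 z + cnj b / 2 * torus_char 0 (-1) z))"
    unfolding uv torus_char_Pair u v by (simp add: add_divide_distrib)
qed

lemma real_polynomial_function_eq_trig_poly_on_torus:
  "real_polynomial_function f \<Longrightarrow> \<exists>g. trig_poly g \<and> (\<forall>z\<in>torus. complex_of_real (f z) = g z)"
proof (induction rule: real_polynomial_function.induct)
  case (linear f)
  obtain g where "trig_poly g" "\<And>z. z \<in> torus \<Longrightarrow> complex_of_real (f z) = g z"
    using bounded_linear_eq_trig_poly_on_torus[OF linear] by blast
  then show ?case by blast
next
  case (const c)
  show ?case
    using trig_poly_char[of "complex_of_real c" 0 0] by (auto simp: torus_char_def)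
next
  case (add f1 f2)
  then obtain g1 g2 where "trig_poly g1" "trig_poly g2"
    and "\<forall>z\<in>torus. complex_of_real (f1 z) = g1 z" "\<forall>z\<in>torus. complex_of_real (f2 z) = g2 z"
    by blast
  then show ?case by (intro exI[of _ "\<lambda>z. g1 z + g2 z"]) (simp add: trig_poly_add)
next
  case (mult f1 f2)
  then obtain g1 g2 where "trig_poly g1" "trig_poly g2"
    and "\<forall>z\<in>torus. complex_of_real (f1 z) = g1 z" "\<forall>z\<in>torus. complex_of_real (f2 z) = g2 z"
    by blast
  moreover obtain h where "trig_poly h" "\<And>z. z \<in> torus \<Longrightarrow> h z = g1 z * g2 z"
    using trig_poly_mult_on_torus[OF \<open>trig_poly g1\<close> \<open>trig_poly g2\<close>] by blast
  ultimately show ?case by (intro exI[of _ h]) simp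
qed

text \<open>Like \<open>circle_measure\<close>, these measures live on all of \<open>\<complex>\<^sup>2\<close> with its Borel sets;
  only their support is the torus.\<close>

locale finite_measure_on_torus = finite_measure M for M :: "(complex \<times> complex) measure" +
  assumes sets_eq_borel [measurable_cong]: "sets M = sets borel"
    and AE_torus: "AE z in M. z \<in> torus"
begin

lemma integrable_bounded_on_torus:
  fixes f :: "complex \<times> complex \<Rightarrow> 'b::{banach, second_countable_topology}"
  assumes "f \<in> borel_measurable borel" and "\<And>z. z \<in> torus \<Longrightarrow> norm (f z) \<le> B"
  shows "integrable M f"
proof (rule Bochner_Integration.integrable_bound[OF integrable_const[of B]])
  show "AE z in M. norm (f z) \<le> norm B"
    using AE_torus by eventually_elim (use assms(2) in force)
qed (use assms(1) measurable_cong_sets[OF sets_eq_borel refl] in blast)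

lemma integrable_torus_char: "integrable M (torus_char j k)"
  by (rule integrable_bounded_on_torus[where B=1]) (simp_all add: norm_torus_char)

lemma integrable_trig_poly: "trig_poly g \<Longrightarrow> integrable M g"
proof (induction rule: trig_poly.induct)
  case (trig_poly_char c j k)
  show ?case using integrable_torus_char by simp
qed simp

lemma integrable_continuous:
  fixes f :: "complex \<times> complex \<Rightarrow> real"
  assumes "continuous_on UNIV f"
  shows "integrable M f"
proof -
  have "bounded (f ` torus)"
    using compact_continuous_image[OF continuous_on_subset[OF assms] compact_torus]
    by (auto intro: compact_imp_bounded)
  then obtain B where "\<And>z. z \<in> torus \<Longrightarrow> norm (f z) \<le> B" by (auto simp: bounded_iff)
  then show ?thesis
    using integrable_bounded_on_torus borel_measurable_continuous_onI[OF assms] by blast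
qed

lemma integral_cong_torus:
  assumes "f \<in> borel_measurable M" "g \<in> borel_measurable M" and "\<And>z. z \<in> torus \<Longrightarrow> f z = g z"
  shows "integral\<^sup>L M f = integral\<^sup>L M g"
  using AE_torus assms by (intro integral_cong_AE) (auto elim!: eventually_mono)

lemma integral_diff_le_on_torus:
  fixes f g :: "complex \<times> complex \<Rightarrow> real"
  assumes "integrable M f" "integrable M g" and "\<And>z. z \<in> torus \<Longrightarrow> \<bar>f z - g z\<bar> \<le> e"
  shows "\<bar>integral\<^sup>L M f - integral\<^sup>L M g\<bar> \<le> e * measure M (space M)"
proof -
  have "\<bar>integral\<^sup>L M f - integral\<^sup>L M g\<bar> \<le> integral\<^sup>L M (\<lambda>z. \<bar>f z - g z\<bar>)"
    using integral_abs_bound[of M "\<lambda>z. f z - g z"] assms(1,2) by simp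
  also have "\<dots> \<le> integral\<^sup>L M (\<lambda>z. e)"
    using AE_torus assms by (intro integral_mono_AE) (auto elim!: eventually_mono)
  finally show ?thesis by (simp add: mult.commute)
qed

end

lemma integral_trig_poly_eq:
  assumes "finite_measure_on_torus M" "finite_measure_on_torus N"
    and "\<And>j k. integral\<^sup>L M (torus_char j k) = integral\<^sup>L N (torus_char j k)"
  shows "trig_poly g \<Longrightarrow> integral\<^sup>L M g = integral\<^sup>L N g"
proof (induction rule: trig_poly.induct)
  case (trig_poly_char c j k)
  then show ?case using assms(3) by simp
next
  case (trig_poly_add f g)
  then show ?case
    using finite_measure_on_torus.integrable_trig_poly[OF assms(1)]
      finite_measure_on_torus.integrable_trig_poly[OF assms(2)] by simp
qed

lemma integral_continuous_diff_le_on_torus: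
  fixes f :: "complex \<times> complex \<Rightarrow> real"
  assumes M: "finite_measure_on_torus M" and N: "finite_measure_on_torus N"
    and coeffs: "\<And>j k. integral\<^sup>L M (torus_char j k) = integral\<^sup>L N (torus_char j k)"
    and f: "continuous_on UNIV f" and e: "e > 0"
  shows "\<bar>integral\<^sup>L M f - integral\<^sup>L N f\<bar> \<le> e * (measure M (space M) + measure N (space N))"
proof -
  obtain g where "polynomial_function g" and fg: "\<And>z. z \<in> torus \<Longrightarrow> norm (f z - g z) < e"
    using Stone_Weierstrass_polynomial_function[OF compact_torus continuous_on_subset[OF f] e] by blast
  then have g: "continuous_on UNIV g" "real_polynomial_function g"
    using continuous_on_polymonial_function real_polynomial_function_eq by blast+
  then obtain p where p: "trig_poly p" "\<forall>z\<in>torus. complex_of_real (g z) = p z"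
    using real_polynomial_function_eq_trig_poly_on_torus by blast
  have "complex_of_real (integral\<^sup>L K g) = integral\<^sup>L K p" if "finite_measure_on_torus K" for K
  proof -
    interpret K: finite_measure_on_torus K by fact
    show ?thesis
      unfolding integral_complex_of_real[symmetric]
      using K.integrable_continuous[OF g(1)] K.integrable_trig_poly[OF p(1)] p(2)
      by (intro K.integral_cong_torus) auto
  qed
  then have "integral\<^sup>L M g = integral\<^sup>L N g"
    using integral_trig_poly_eq[OF M N coeffs p(1)] M N of_real_eq_iff by metis
  moreover have bound: "\<bar>integral\<^sup>L K f - integral\<^sup>L K g\<bar> \<le> e * measure K (space K)"
    if "finite_measure_on_torus K" for K
  proof -
    interpret K: finite_measure_on_torus K by fact
    show ?thesis
      using K.integrable_continuous[OF f] K.integrable_continuous[OF g(1)] fg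
      by (intro K.integral_diff_le_on_torus) (auto intro: less_imp_le)
  qed
  ultimately show ?thesis
    using bound[OF M] bound[OF N] by (simp add: distrib_left)
qed

lemma integral_continuous_eq_on_torus:
  fixes f :: "complex \<times> complex \<Rightarrow> real"
  assumes M: "finite_measure_on_torus M" and N: "finite_measure_on_torus N"
    and coeffs: "\<And>j k. integral\<^sup>L M (torus_char j k) = integral\<^sup>L N (torus_char j k)"
    and f: "continuous_on UNIV f"
  shows "integral\<^sup>L M f = integral\<^sup>L N f"
proof -
  define C where "C = measure M (space M) + measure N (space N) + 1"
  have C: "C > 0" unfolding C_def by (simp add: add_nonneg_pos)
  have "\<bar>integral\<^sup>L M f - integral\<^sup>L N f\<bar> \<le> 0 + e" if "e > 0" for e
  proof -
    have "\<bar>integral\<^sup>L M f - integral\<^sup>L N f\<bar> \<le> e / C * (C - 1)"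
      using integral_continuous_diff_le_on_torus[OF M N coeffs f, of "e / C"] C that
      by (simp add: C_def)
    also have "\<dots> \<le> e" using C that by (simp add: field_simps)
    finally show ?thesis by simp
  qed
  then show ?thesis using field_le_epsilon[of _ 0] by force
qed

lemma finite_measure_on_torus_eqI:
  assumes M: "finite_measure_on_torus M" and N: "finite_measure_on_torus N"
    and coeffs: "\<And>j k. integral\<^sup>L M (torus_char j k) = integral\<^sup>L N (torus_char j k)"
  shows "M = N"
proof (rule finite_measure_eqI_integral_continuous)
  show "finite_measure M" "finite_measure N" "sets M = sets borel" "sets N = sets borel"
    using M N by (auto simp: finite_measure_on_torus_def finite_measure_on_torus_axioms_def)
qed (rule integral_continuous_eq_on_torus[OF M N coeffs])

section \<open>Products of independent variables on the torus\<close>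

lemma prod_power_int_distrib:
  fixes f :: "'a \<Rightarrow> 'b::field"
  shows "(\<Prod>i\<in>A. f i) powi j = (\<Prod>i\<in>A. f i powi j)"
  by (induction A rule: infinite_finite_induct) (simp_all add: power_int_mult_distrib)

lemma measurable_componentwise_prod:
  assumes "\<And>i. sets (M i) = sets (borel :: (complex \<times> complex) measure)"
  shows "(\<lambda>x. (\<Prod>i\<in>I. fst (x i), \<Prod>i\<in>I. snd (x i))) \<in> borel_measurable (PiM I M)"
proof -
  have "fst \<in> borel_measurable (borel :: (complex \<times> complex) measure)"
    "snd \<in> borel_measurable (borel :: (complex \<times> complex) measure)"
    unfolding borel_prod[symmetric] by simp_all
  then have [measurable]: "fst \<in> borel_measurable (M i)" "snd \<in> borel_measurable (M i)" for i
    using measurable_cong_sets[OF assms refl] by blast+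
  have "(\<lambda>x. (\<Prod>i\<in>I. fst (x i), \<Prod>i\<in>I. snd (x i))) \<in> PiM I M \<rightarrow>\<^sub>M borel \<Otimes>\<^sub>M borel"
    by measurable
  then show ?thesis by (simp only: borel_prod)
qed

lemma
  fixes M :: "'i \<Rightarrow> (complex \<times> complex) measure"
  assumes I: "finite I" and prob: "\<And>i. prob_space (M i)" and M: "\<And>i. finite_measure_on_torus (M i)"
  defines "D \<equiv> distr (PiM I M) borel (\<lambda>x. (\<Prod>i\<in>I. fst (x i), \<Prod>i\<in>I. snd (x i)))"
  shows finite_measure_on_torus_distr_componentwise_prod: "finite_measure_on_torus D"
    and integral_torus_char_distr_componentwise_prod:
      "integral\<^sup>L D (torus_char j k) = (\<Prod>i\<in>I. integral\<^sup>L (M i) (torus_char j k))"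
proof -
  have sets_M: "sets (M i) = sets borel" for i
    using M by (simp add: finite_measure_on_torus_def finite_measure_on_torus_axioms_def)
  note meas = measurable_componentwise_prod[OF sets_M]
  interpret P: prob_space "PiM I M" by (rule prob_space_PiM, rule prob)
  interpret D: prob_space D unfolding D_def by (rule P.prob_space_distr[OF meas])
  have "AE x in PiM I M. \<forall>i\<in>I. x i \<in> torus"
    using I prob finite_measure_on_torus.AE_torus[OF M]
    by (intro AE_finite_allI AE_PiM_component) auto
  then have "AE x in PiM I M. (\<Prod>i\<in>I. fst (x i), \<Prod>i\<in>I. snd (x i)) \<in> torus"
    by eventually_elim (auto simp: mem_torus prod_norm[symmetric] intro!: prod.neutral)
  then have "AE z in D. z \<in> torus"
    unfolding D_def by (subst AE_distr_iff[OF meas]) simp_all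
  moreover have "sets D = sets borel" by (simp add: D_def)
  ultimately show "finite_measure_on_torus D"
    using D.finite_measure_axioms
    by (simp add: finite_measure_on_torus_def finite_measure_on_torus_axioms_def)
  have "product_sigma_finite M"
    unfolding product_sigma_finite_def using prob prob_space_imp_sigma_finite by blast
  then have "integral\<^sup>L (PiM I M) (\<lambda>x. \<Prod>i\<in>I. torus_char j k (x i)) =
      (\<Prod>i\<in>I. integral\<^sup>L (M i) (torus_char j k))"
    by (rule product_sigma_finite.product_integral_prod[OF _ I])
       (simp add: finite_measure_on_torus.integrable_torus_char[OF M])
  then show "integral\<^sup>L D (torus_char j k) = (\<Prod>i\<in>I. integral\<^sup>L (M i) (torus_char j k))"
    unfolding D_def integral_distr[OF meas borel_measurable_torus_char]
    by (simp add: torus_char_def prod_power_int_distrib prod.distrib)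
qed

section \<open>The circle measure and the Poisson kernel\<close>

lemma measurable_cis_restrict [measurable]:
  "cis \<in> restrict_space lborel {0..<2*pi} \<rightarrow>\<^sub>M borel"
proof -
  have "(cis :: real \<Rightarrow> complex) \<in> borel_measurable borel"
    by (intro borel_measurable_continuous_onI continuous_intros)
  then show ?thesis by (intro measurable_restrict_space1) simp
qed

lemma sets_circle_measure [simp, measurable_cong]: "sets circle_measure = sets borel"
  by (simp add: circle_measure_def)

lemma space_circle_measure [simp]: "space circle_measure = UNIV"
  by (simp add: circle_measure_def)

lemma emeasure_circle_measure: "emeasure circle_measure UNIV = 2 * pi"
  unfolding circle_measure_def
  by (subst emeasure_distr[OF measurable_cis_restrict])
     (auto simp: space_restrict_space emeasure_restrict_space)

lemma finite_measure_circle_measure: "finite_measure circle_measure"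
  by (rule finite_measureI) (simp add: emeasure_circle_measure)

lemma measure_circle_measure: "measure circle_measure UNIV = 2 * pi"
  by (simp add: measure_def emeasure_circle_measure)

lemma AE_circle_measure: "AE z in circle_measure. cmod z = 1"
  unfolding circle_measure_def by (subst AE_distr_iff) auto

lemma integral_circle_measure:
  fixes g :: "complex \<Rightarrow> 'b::{banach, second_countable_topology}"
  assumes g: "g \<in> borel_measurable borel"
  shows "integral\<^sup>L circle_measure g = integral\<^sup>L lborel (\<lambda>t. indicator {0..2*pi} t *\<^sub>R g (cis t))"
proof -
  have gc: "(\<lambda>t. g (cis t)) \<in> borel_measurable borel"
    using g by (intro measurable_compose[OF borel_measurable_continuous_onI[OF continuous_on_cis]])
       (auto intro: continuous_on_id)
  have "integral\<^sup>L circle_measure g = integral\<^sup>L lborel (\<lambda>t. indicator {0..<2*pi} t *\<^sub>R g (cis t))"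
    unfolding circle_measure_def using g by (simp add: integral_distr integral_restrict_space)
  also have "\<dots> = integral\<^sup>L lborel (\<lambda>t. indicator {0..2*pi} t *\<^sub>R g (cis t))"
    using gc AE_lborel_singleton[of "2*pi"]
    by (intro integral_cong_AE) (auto elim!: eventually_mono simp: indicator_def)
  finally show ?thesis .
qed

lemma integrable_circle_measure:
  fixes f :: "complex \<Rightarrow> 'b::{banach, second_countable_topology}"
  assumes "f \<in> borel_measurable borel" and "\<And>z. cmod z = 1 \<Longrightarrow> norm (f z) \<le> B"
  shows "integrable circle_measure f"
proof (rule Bochner_Integration.integrable_bound)
  show "integrable circle_measure (\<lambda>_. B)"
    using finite_measure.integrable_const[OF finite_measure_circle_measure] .
  show "AE z in circle_measure. norm (f z) \<le> norm B"
    using AE_circle_measure by eventually_elim (use assms(2) in force)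
qed (use assms(1) in simp)

lemma integral_circle_measure_powi:
  "integral\<^sup>L circle_measure (\<lambda>z. z powi m) = (if m = 0 then complex_of_real (2 * pi) else 0)"
proof -
  have "integral\<^sup>L circle_measure (\<lambda>z. z powi m) =
      integral\<^sup>L lborel (\<lambda>t. indicator {0..2*pi} t *\<^sub>R cis (of_int m * t))"
    by (simp add: integral_circle_measure cis_power_int)
  also have "\<dots> = (if m = 0 then complex_of_real (2 * pi) else 0)"
  proof (cases "m = 0")
    case True
    then show ?thesis by (simp add: measure_def scaleR_conv_of_real)
  next
    case False
    define F where "F = (\<lambda>t::real. exp (\<i> * of_int m * of_real t) / (\<i> * of_int m))"
    have "(F has_vector_derivative cis (of_int m * t)) (at t within {0..2*pi})" for t
    proof -
      have "((\<lambda>z. exp (\<i> * of_int m * z) / (\<i> * of_int m)) has_field_derivative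
          exp (\<i> * of_int m * of_real t)) (at (of_real t))"
        using False by (auto intro!: derivative_eq_intros simp: field_simps)
      from has_vector_derivative_real_field[OF this]
      show ?thesis by (simp add: F_def cis_conv_exp mult.assoc)
    qed
    then have "integral\<^sup>L lborel (\<lambda>t. indicator {0..2*pi} t *\<^sub>R cis (of_int m * t)) = F (2*pi) - F 0"
      by (intro integral_FTC_atLeastAtMost) (auto intro!: continuous_intros)
    also have "F (2*pi) = F 0"
      using cis_conv_exp[of "2 * pi * of_int m"] by (simp add: F_def mult_ac)
    finally show ?thesis using False by simp
  qed
  finally show ?thesis .
qed

lemma one_minus_norm_le_norm_one_minus_mult:
  "cmod x = 1 \<Longrightarrow> 1 - cmod a \<le> cmod (1 - a * x)"
  using norm_triangle_ineq2[of 1 "a * x"] by (simp add: norm_mult)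

lemma sums_geometric_powi:
  fixes a x :: complex
  assumes "cmod a < 1" "cmod x = 1"
  shows "(\<lambda>i. a ^ i * x powi (m + int i)) sums (x powi m / (1 - a * x))"
proof -
  have "norm (a * x) < 1" using assms by (simp add: norm_mult)
  then have "(\<lambda>i. x powi m * (a * x) ^ i) sums (x powi m * (1 / (1 - a * x)))"
    by (intro sums_mult geometric_sums)
  moreover have "x powi m * (a * x) ^ i = a ^ i * x powi (m + int i)" for i
  proof -
    have "x \<noteq> 0" using assms(2) by auto
    then show ?thesis by (simp add: power_int_add power_mult_distrib)
  qed
  ultimately show ?thesis by simp
qed

lemma sums_integral_circle_measure_geometric_terms:
  "(\<lambda>i. integral\<^sup>L circle_measure (\<lambda>x. a ^ i * x powi (m + int i))) sums
    (if m \<le> 0 then complex_of_real (2 * pi) * a ^ nat (-m) else 0)"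
proof (cases "m \<le> 0")
  case True
  then have "(\<lambda>i. integral\<^sup>L circle_measure (\<lambda>x. a ^ i * x powi (m + int i))) =
      (\<lambda>i. if i = nat (-m) then complex_of_real (2 * pi) * a ^ i else 0)"
    by (auto simp: fun_eq_iff integral_circle_measure_powi)
  then show ?thesis
    using True sums_single[of "nat (-m)" "\<lambda>i. complex_of_real (2 * pi) * a ^ i"] by simp
next
  case False
  then have "(\<lambda>i. integral\<^sup>L circle_measure (\<lambda>x. a ^ i * x powi (m + int i))) = (\<lambda>i. 0)"
    by (auto simp: fun_eq_iff integral_circle_measure_powi)
  then show ?thesis using False by simp
qed

lemma integral_circle_measure_geometric:
  fixes a :: complex
  assumes a: "cmod a < 1"
  shows "integral\<^sup>L circle_measure (\<lambda>x. x powi m / (1 - a * x)) =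
    (if m \<le> 0 then complex_of_real (2 * pi) * a ^ nat (-m) else 0)"
proof -
  define f where "f = (\<lambda>(i::nat) (x::complex). a ^ i * x powi (m + int i))"
  have [measurable]: "f i \<in> borel_measurable borel" for i
    unfolding f_def by measurable
  have norm_f: "cmod x = 1 \<Longrightarrow> norm (f i x) = cmod a ^ i" for i x
    by (simp add: f_def norm_mult norm_power norm_power_int)
  have int_f: "integrable circle_measure (f i)" for i
    by (rule integrable_circle_measure[where B="cmod a ^ i"]) (simp_all add: norm_f)
  have "integral\<^sup>L circle_measure (\<lambda>x. norm (f i x)) = integral\<^sup>L circle_measure (\<lambda>x. cmod a ^ i)" for i
    using AE_circle_measure norm_f by (intro integral_cong_AE) (auto elim!: eventually_mono)
  then have summable_int: "summable (\<lambda>i. integral\<^sup>L circle_measure (\<lambda>x. norm (f i x)))"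
    using a by (simp add: measure_circle_measure summable_geometric)
  have summable_AE: "AE x in circle_measure. summable (\<lambda>i. norm (f i x))"
    using AE_circle_measure by eventually_elim (use a in \<open>simp add: norm_f summable_geometric\<close>)
  note integral_suminf[OF int_f summable_AE summable_int] integrable_suminf[OF int_f summable_AE summable_int]
  moreover have "integral\<^sup>L circle_measure (\<lambda>x. x powi m / (1 - a * x)) =
      integral\<^sup>L circle_measure (\<lambda>x. \<Sum>i. f i x)"
  proof (rule integral_cong_AE)
    show "(\<lambda>x. \<Sum>i. f i x) \<in> borel_measurable circle_measure"
      using \<open>integrable circle_measure (\<lambda>x. \<Sum>i. f i x)\<close> by (rule borel_measurable_integrable)
    show "AE x in circle_measure. x powi m / (1 - a * x) = (\<Sum>i. f i x)"
      using AE_circle_measure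
      by eventually_elim (simp add: f_def sums_unique[OF sums_geometric_powi[OF a]])
  qed simp
  moreover have "(\<lambda>i. integral\<^sup>L circle_measure (f i)) sums
      (if m \<le> 0 then complex_of_real (2 * pi) * a ^ nat (-m) else 0)"
    unfolding f_def by (rule sums_integral_circle_measure_geometric_terms)
  ultimately show ?thesis by (simp add: sums_iff)
qed

lemma inverse_eq_cnj_if_norm_1: "cmod z = 1 \<Longrightarrow> inverse z = cnj z"
  using complex_norm_square[of z] by (intro inverse_unique) simp

lemma cnj_powi_uminus_if_norm_1: "cmod z = 1 \<Longrightarrow> cnj z powi (-k) = z powi k"
  by (simp add: inverse_eq_cnj_if_norm_1[symmetric] power_int_inverse power_int_minus)

lemma borel_measurable_cnj [measurable]:
  "f \<in> borel_measurable M \<Longrightarrow> (\<lambda>x. cnj (f x)) \<in> borel_measurable M"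
  using borel_measurable_continuous_onI[OF continuous_on_cnj[OF continuous_on_id]]
  by (rule measurable_compose[rotated])

definition poisson_kernel :: "complex \<Rightarrow> complex \<Rightarrow> real" where
  "poisson_kernel a x = (1 - (cmod a)\<^sup>2) / (cmod (1 - a * x))\<^sup>2"

definition poisson_coeff :: "complex \<Rightarrow> int \<Rightarrow> complex" where
  "poisson_coeff a k = (if k \<le> 0 then a ^ nat (-k) else cnj a ^ nat k)"

lemma borel_measurable_poisson_kernel [measurable]: "poisson_kernel a \<in> borel_measurable borel"
  unfolding poisson_kernel_def by measurable

lemma poisson_kernel_eq:
  assumes x: "cmod x = 1" and a: "cmod a < 1"
  shows "complex_of_real (poisson_kernel a x) = 1 / (1 - a * x) + cnj (1 / (1 - a * x)) - 1"
proof -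
  define w where "w = 1 - a * x"
  have "cmod (a * x) < 1" using x a by (simp add: norm_mult)
  then have "w \<noteq> 0" unfolding w_def by auto
  have "1 - a * cnj a = cnj w + w - w * cnj w"
    using complex_norm_square[of x] x by (simp add: w_def algebra_simps)
  then have "complex_of_real (poisson_kernel a x) = (cnj w + w - w * cnj w) / (w * cnj w)"
    unfolding poisson_kernel_def w_def[symmetric]
    by (simp add: complex_norm_square[symmetric] complex_norm_square[of a, symmetric])
  also have "\<dots> = 1 / w + cnj (1 / w) - 1" using \<open>w \<noteq> 0\<close> by (simp add: field_simps)
  finally show ?thesis by (simp add: w_def)
qed

lemma poisson_kernel_le:
  assumes x: "cmod x = 1" and a: "cmod a < 1"
  shows "poisson_kernel a x \<le> 1 / (1 - cmod a)\<^sup>2"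
proof -
  have "1 - cmod a \<le> cmod (1 - a * x)"
    using x by (rule one_minus_norm_le_norm_one_minus_mult)
  then have denom: "(1 - cmod a)\<^sup>2 \<le> (cmod (1 - a * x))\<^sup>2" "0 < 1 - cmod a" "0 < cmod (1 - a * x)"
    using a by (auto intro: power_mono)
  have num: "0 \<le> 1 - (cmod a)\<^sup>2" "1 - (cmod a)\<^sup>2 \<le> 1"
    using a by (auto simp: abs_square_le_1)
  have "poisson_kernel a x \<le> 1 / (cmod (1 - a * x))\<^sup>2"
    unfolding poisson_kernel_def using num by (intro divide_right_mono) auto
  also have "\<dots> \<le> 1 / (1 - cmod a)\<^sup>2"
    using denom by (intro divide_left_mono) auto
  finally show ?thesis .
qed

lemma integral_circle_measure_poisson_kernel:
  assumes a: "cmod a < 1"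
  shows "integral\<^sup>L circle_measure (\<lambda>x. x powi k * complex_of_real (poisson_kernel a x)) =
    complex_of_real (2 * pi) * poisson_coeff a k"
proof -
  have int_geometric: "integrable circle_measure (\<lambda>x. x powi m / (1 - a * x))" for m
  proof (rule integrable_circle_measure)
    fix x :: complex assume x: "cmod x = 1"
    have "1 - cmod a \<le> cmod (1 - a * x)"
      using x by (rule one_minus_norm_le_norm_one_minus_mult)
    then show "norm (x powi m / (1 - a * x)) \<le> 1 / (1 - cmod a)"
      using x a by (simp add: norm_divide norm_power_int frac_le)
  qed simp
  have int_powi: "integrable circle_measure (\<lambda>x. x powi k)"
    by (rule integrable_circle_measure) (auto simp: norm_power_int)
  have "integral\<^sup>L circle_measure (\<lambda>x. x powi k * complex_of_real (poisson_kernel a x)) =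
      integral\<^sup>L circle_measure (\<lambda>x. x powi k / (1 - a * x) + cnj (x powi (-k) / (1 - a * x)) - x powi k)"
    using AE_circle_measure
  proof (intro integral_cong_AE)
    show "AE x in circle_measure. x powi k * complex_of_real (poisson_kernel a x) =
        x powi k / (1 - a * x) + cnj (x powi (-k) / (1 - a * x)) - x powi k"
      using AE_circle_measure
      by eventually_elim
         (simp add: poisson_kernel_eq a cnj_powi_uminus_if_norm_1 divide_inverse algebra_simps)
  qed simp_all
  also have "\<dots> = integral\<^sup>L circle_measure (\<lambda>x. x powi k / (1 - a * x)) +
      cnj (integral\<^sup>L circle_measure (\<lambda>x. x powi (-k) / (1 - a * x))) -
      integral\<^sup>L circle_measure (\<lambda>x. x powi k)"
    using int_geometric[of k] integrable_cnj[OF int_geometric[of "-k"]] int_powi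
    by (simp only: Bochner_Integration.integral_diff Bochner_Integration.integral_add
        Bochner_Integration.integrable_add Bochner_Integration.integral_cnj)
  also have "\<dots> = complex_of_real (2 * pi) * poisson_coeff a k"
    by (auto simp: integral_circle_measure_geometric[OF a] integral_circle_measure_powi poisson_coeff_def)
  finally show ?thesis .
qed

lemma poisson_coeff_mult_norm_1:
  assumes "cmod u = 1"
  shows "poisson_coeff (psi * (if s then cnj u else u)) k =
    poisson_coeff psi k * u powi (if s then k else -k)"
  using inverse_eq_cnj_if_norm_1[OF assms, symmetric]
  by (cases "k \<le> 0"; cases s)
     (auto simp: poisson_coeff_def power_mult_distrib power_int_def power_inverse)

lemma poisson_coeff_power: "poisson_coeff w k ^ n = poisson_coeff (w ^ n) k"
  by (simp add: poisson_coeff_def complex_cnj_power power_mult[symmetric] mult.commute)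

section \<open>The distributions \<open>BC\<^sub>\<plusminus>\<close>\<close>

abbreviation circle_pair_measure :: "(complex \<times> complex) measure" where
  "circle_pair_measure \<equiv> circle_measure \<Otimes>\<^sub>M circle_measure"

interpretation circle_pair: pair_sigma_finite circle_measure circle_measure
  using finite_measure_circle_measure
  by (simp add: pair_sigma_finite_def finite_measure_def)

lemma sets_circle_pair_measure [measurable_cong]:
  "sets circle_pair_measure = sets borel"
proof -
  have "sets circle_pair_measure = sets (borel \<Otimes>\<^sub>M (borel :: complex measure))"
    by (rule sets_pair_measure_cong) simp_all
  then show ?thesis by (simp only: borel_prod)
qed

lemma finite_measure_on_torus_circle_pair_measure:
  "finite_measure_on_torus circle_pair_measure"
proof -
  have "AE z in circle_pair_measure. z \<in> torus"
  proof (rule circle_pair.AE_pair_measure)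
    show "{z \<in> space circle_pair_measure. z \<in> torus} \<in> sets circle_pair_measure"
    proof -
      have "torus \<in> sets circle_pair_measure"
        unfolding sets_circle_pair_measure by (rule torus_in_borel)
      then show ?thesis by (simp add: space_pair_measure)
    qed
    show "AE u in circle_measure. AE v in circle_measure. (u, v) \<in> torus"
      using AE_circle_measure by eventually_elim (use AE_circle_measure in \<open>auto simp: mem_torus\<close>)
  qed
  then show ?thesis
    using finite_measure_pair_measure[OF finite_measure_circle_measure finite_measure_circle_measure]
      sets_circle_pair_measure
    unfolding finite_measure_on_torus_def finite_measure_on_torus_axioms_def by blast
qed

lemma borel_measurable_BC_density [measurable]: "BC_density s psi \<in> borel_measurable borel"
proof -
  have "continuous_on UNIV (\<lambda>z. cmod (1 - psi * snd z * (if s then cnj (fst z) else fst z)))"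
    by (cases s) (auto intro!: continuous_intros)
  then have [measurable]: "(\<lambda>z. cmod (1 - psi * snd z * (if s then cnj (fst z) else fst z)))
      \<in> borel_measurable borel"
    by (rule borel_measurable_continuous_onI)
  show ?thesis
    unfolding BC_density_def split_beta' by measurable
qed

lemma BC_density_nonneg: "cmod psi < 1 \<Longrightarrow> 0 \<le> BC_density s psi z"
  using abs_square_le_1[of "cmod psi"] by (auto simp: BC_density_def split_beta')

lemma BC_density_eq_poisson_kernel:
  assumes "cmod u = 1"
  shows "BC_density s psi (u, v) = poisson_kernel (psi * (if s then cnj u else u)) v / (4 * pi\<^sup>2)"
  using assms by (simp add: BC_density_def poisson_kernel_def norm_mult mult_ac)

lemma BC_density_le:
  assumes psi: "cmod psi < 1" and z: "z \<in> torus"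
  shows "BC_density s psi z \<le> 1 / (1 - cmod psi)\<^sup>2 / (4 * pi\<^sup>2)"
proof -
  obtain u v where uv: "z = (u, v)" "cmod u = 1" "cmod v = 1"
    using z by (cases z) (auto simp: mem_torus)
  define a where "a = psi * (if s then cnj u else u)"
  have "cmod a = cmod psi"
    using uv by (simp add: a_def norm_mult)
  then have "poisson_kernel a v \<le> 1 / (1 - cmod psi)\<^sup>2"
    using poisson_kernel_le[OF uv(3), of a] psi by simp
  then show ?thesis
    unfolding uv(1) BC_density_eq_poisson_kernel[OF uv(2)] a_def[symmetric]
    by (rule divide_right_mono) simp
qed

definition BC_fourier_coeff :: "bool \<Rightarrow> complex \<Rightarrow> int \<Rightarrow> int \<Rightarrow> complex" where
  "BC_fourier_coeff s psi j k = (if j + (if s then k else -k) = 0 then poisson_coeff psi k else 0)"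

lemma BC_fourier_coeff_power:
  "n \<ge> 1 \<Longrightarrow> BC_fourier_coeff s w j k ^ n = BC_fourier_coeff s (w ^ n) j k"
  by (simp add: BC_fourier_coeff_def poisson_coeff_power)

lemma integral_BC_density_torus_char:
  assumes psi: "cmod psi < 1"
  shows "integral\<^sup>L circle_pair_measure (\<lambda>z. BC_density s psi z *\<^sub>R torus_char j k z) =
    BC_fourier_coeff s psi j k"
proof -
  interpret T: finite_measure_on_torus circle_pair_measure
    by (rule finite_measure_on_torus_circle_pair_measure)
  let ?e = "if s then k else -k"
  have int: "integrable circle_pair_measure (\<lambda>z. BC_density s psi z *\<^sub>R torus_char j k z)"
    using BC_density_le[OF psi] BC_density_nonneg[OF psi]
    by (intro T.integrable_bounded_on_torus[where B="1 / (1 - cmod psi)\<^sup>2 / (4 * pi\<^sup>2)"])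
       (simp_all add: norm_torus_char)
  then have "integral\<^sup>L circle_pair_measure (\<lambda>z. BC_density s psi z *\<^sub>R torus_char j k z) =
      integral\<^sup>L circle_measure (\<lambda>u. integral\<^sup>L circle_measure
        (\<lambda>v. BC_density s psi (u, v) *\<^sub>R torus_char j k (u, v)))"
    by (rule circle_pair.integral_fst'[symmetric])
  also have "\<dots> = integral\<^sup>L circle_measure
      (\<lambda>u. complex_of_real (1 / (2 * pi)) * poisson_coeff psi k * u powi (j + ?e))"
  proof (rule integral_cong_AE)
    show "(\<lambda>u. integral\<^sup>L circle_measure (\<lambda>v. BC_density s psi (u, v) *\<^sub>R torus_char j k (u, v)))
        \<in> borel_measurable circle_measure"
      by (rule borel_measurable_integrable[OF circle_pair.integrable_fst'[OF int]])
    show "AE u in circle_measure. integral\<^sup>L circle_measure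
        (\<lambda>v. BC_density s psi (u, v) *\<^sub>R torus_char j k (u, v)) =
        complex_of_real (1 / (2 * pi)) * poisson_coeff psi k * u powi (j + ?e)"
      using AE_circle_measure
    proof eventually_elim
      case (elim u)
      then have "u \<noteq> 0" by auto
      have a: "cmod (psi * (if s then cnj u else u)) < 1"
        using elim psi by (simp add: norm_mult)
      have "integral\<^sup>L circle_measure (\<lambda>v. BC_density s psi (u, v) *\<^sub>R torus_char j k (u, v)) =
          integral\<^sup>L circle_measure (\<lambda>v. complex_of_real (1 / (4 * pi\<^sup>2)) * u powi j *
            (v powi k * complex_of_real (poisson_kernel (psi * (if s then cnj u else u)) v)))"
        by (simp add: BC_density_eq_poisson_kernel[OF elim] scaleR_conv_of_real mult_ac)
      also have "\<dots> = complex_of_real (1 / (4 * pi\<^sup>2)) * u powi j *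
          (complex_of_real (2 * pi) * poisson_coeff psi k * u powi ?e)"
        by (simp only: integral_mult_right_zero integral_circle_measure_poisson_kernel[OF a]
            poisson_coeff_mult_norm_1[OF elim] mult.assoc)
      also have "\<dots> = complex_of_real (1 / (2 * pi)) * poisson_coeff psi k * u powi (j + ?e)"
        using \<open>u \<noteq> 0\<close> by (auto simp: power_int_add power2_eq_square field_simps)
      finally show ?case .
    qed
  qed simp
  also have "\<dots> = BC_fourier_coeff s psi j k"
    by (simp add: integral_circle_measure_powi BC_fourier_coeff_def)
  finally show ?thesis .
qed

lemma prob_space_BC:
  assumes psi: "cmod psi < 1"
  shows "prob_space (BC s psi)"
proof
  have "integrable circle_pair_measure (BC_density s psi)"
    using BC_density_le[OF psi] BC_density_nonneg[OF psi]
    by (intro finite_measure_on_torus.integrable_bounded_on_torus[OF finite_measure_on_torus_circle_pair_measure,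
          where B="1 / (1 - cmod psi)\<^sup>2 / (4 * pi\<^sup>2)"]) simp_all
  moreover have "integral\<^sup>L circle_pair_measure (BC_density s psi) = 1"
  proof -
    have "integral\<^sup>L circle_pair_measure (\<lambda>z. BC_density s psi z *\<^sub>R torus_char 0 0 z) = 1"
      unfolding integral_BC_density_torus_char[OF psi] by (simp add: BC_fourier_coeff_def poisson_coeff_def)
    then show ?thesis by (simp add: scaleR_conv_of_real torus_char_def)
  qed
  moreover have "(\<lambda>z. ennreal (BC_density s psi z)) \<in> borel_measurable circle_pair_measure"
    by measurable
  ultimately show "emeasure (BC s psi) (space (BC s psi)) = 1"
    using BC_density_nonneg[OF psi]
    by (simp add: BC_def emeasure_density[OF _ sets.top] nn_integral_eq_integral)
qed

lemma integral_BC_torus_char: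
  assumes psi: "cmod psi < 1"
  shows "integral\<^sup>L (BC s psi) (torus_char j k) = BC_fourier_coeff s psi j k"
  unfolding BC_def using BC_density_nonneg[OF psi]
  by (subst integral_density) (simp_all add: integral_BC_density_torus_char[OF psi])

lemma finite_measure_on_torus_BC:
  assumes psi: "cmod psi < 1"
  shows "finite_measure_on_torus (BC s psi)"
proof -
  interpret T: finite_measure_on_torus circle_pair_measure
    by (rule finite_measure_on_torus_circle_pair_measure)
  have "AE z in BC s psi. z \<in> torus"
    unfolding BC_def using T.AE_torus by (subst AE_density) (auto elim!: eventually_mono)
  moreover have "sets (BC s psi) = sets borel"
    unfolding BC_def sets_density by (rule sets_circle_pair_measure)
  ultimately show ?thesis
    using prob_space_BC[OF psi] unfolding prob_space_def
    by (simp add: finite_measure_on_torus_def finite_measure_on_torus_axioms_def)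
qed

lemma distr_componentwise_prod_BC:
  fixes w :: complex
  assumes n: "n \<ge> 1" and wn: "cmod (w ^ n) < 1"
  shows "distr (PiM {..<n} (\<lambda>_. BC s w)) circle_pair_measure
      (\<lambda>x. (\<Prod>j<n. fst (x j), \<Prod>j<n. snd (x j))) = BC s (w ^ n)"
proof -
  have w: "cmod w < 1"
  proof (rule ccontr)
    assume "\<not> cmod w < 1"
    then have "1 \<le> cmod w ^ n" by (simp add: one_le_power)
    with wn show False by (simp add: norm_power)
  qed
  let ?D = "distr (PiM {..<n} (\<lambda>_. BC s w)) borel (\<lambda>x. (\<Prod>j<n. fst (x j), \<Prod>j<n. snd (x j)))"
  have "distr (PiM {..<n} (\<lambda>_. BC s w)) circle_pair_measure
      (\<lambda>x. (\<Prod>j<n. fst (x j), \<Prod>j<n. snd (x j))) = ?D"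
    by (rule distr_cong[OF refl sets_circle_pair_measure]) simp
  also have "?D = BC s (w ^ n)"
  proof (rule finite_measure_on_torus_eqI)
    show "finite_measure_on_torus ?D"
      using prob_space_BC[OF w] finite_measure_on_torus_BC[OF w]
      by (intro finite_measure_on_torus_distr_componentwise_prod) simp_all
    show "finite_measure_on_torus (BC s (w ^ n))"
      by (rule finite_measure_on_torus_BC[OF wn])
    show "integral\<^sup>L ?D (torus_char j k) = integral\<^sup>L (BC s (w ^ n)) (torus_char j k)" for j k
      using prob_space_BC[OF w] finite_measure_on_torus_BC[OF w] n
      by (simp add: integral_torus_char_distr_componentwise_prod integral_BC_torus_char w wn
          BC_fourier_coeff_power)
  qed
  finally show ?thesis .
qed

theorem mainTheorem10:
  fixes s :: bool and psi :: complex
  assumes "cmod psi < 1"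
  shows "prob_space (BC s psi) \<and>
    (\<forall>(n::nat) (w::complex). n \<ge> 1 \<longrightarrow> w ^ n = psi \<longrightarrow>
       distr (PiM {..<n} (\<lambda>_. BC s w)) (circle_measure \<Otimes>\<^sub>M circle_measure)
         (\<lambda>x. (\<Prod>j<n. fst (x j), \<Prod>j<n. snd (x j))) = BC s psi)"
proof (intro conjI allI impI)
  show "prob_space (BC s psi)" by (rule prob_space_BC[OF assms])
  fix n :: nat and w :: complex
  assume "n \<ge> 1" "w ^ n = psi"
  then show "distr (PiM {..<n} (\<lambda>_. BC s w)) (circle_measure \<Otimes>\<^sub>M circle_measure)
      (\<lambda>x. (\<Prod>j<n. fst (x j), \<Prod>j<n. snd (x j))) = BC s psi"
    using distr_componentwise_prod_BC[of n w s] assms by simp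
qed

end
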